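(* For $i\in\{1,2\}$, let $G_i$ be a 2-edge-connected $(3,4)$-biregular $X_i,Y_i$-bigraph (vertices of $X_i$ of degree 3, of $Y_i$ of degree 4), with $G_1,G_2$ vertex-disjoint, having a $P_7$-factor $F_i$, and choose an edge $e_i=a_ib_i\in E(G_i)\setminus E(F_i)$ with $a_i\in X_i$, $b_i\in Y_i$. Let $G$ be the graph obtained from the disjoint union $G_1\cup G_2$ by deleting $e_1$ and $e_2$ and adding the edges $e_1'=a_1b_2$ and $e_2'=a_2b_1$, so that $G$ is a $(3,4)$-biregular $(X_1\cup X_2),(Y_1\cup Y_2)$-bigraph. If $G_1$ has no full 3-regular subgraph, then $G$ is a 2-edge-connected $(3,4)$-biregular bigraph having a $P_7$-factor but no full 3-regular subgraph.
   Context: Graphs may have multiple edges. An $X,Y$-bigraph is a bipartite graph with partite sets $X$ and $Y$. A $(3,4)$-biregular bigraph is a bipartite graph in which every vertex of one part has degree 3 and every vertex of the other part has degree 4. A $P_7$-factor is a spanning subgraph each of whose components is a path on 7 vertices. A full 3-regular subgraph of a $(3,4)$-biregular bigraph is a 3-regular subgraph that contains every vertex of degree 4. *)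

theory Defs
  imports Main "HOL-Library.Multiset"
begin

text \<open>Finite multigraphs: a vertex set V and a multiset E of edges; an edge is a pair
  of endpoints, read as unordered. In a bigraph every edge is stored as (x,y)
  with x in X and y in Y.\<close>

definition is_bigraph :: "'v set \<Rightarrow> 'v set \<Rightarrow> ('v \<times> 'v) multiset \<Rightarrow> bool" where
  "is_bigraph X Y E \<longleftrightarrow> finite X \<and> finite Y \<and> X \<inter> Y = {} \<and>
     (\<forall>e \<in># E. fst e \<in> X \<and> snd e \<in> Y)"

definition deg :: "('v \<times> 'v) multiset \<Rightarrow> 'v \<Rightarrow> nat" where
  "deg E v = size (filter_mset (\<lambda>e. fst e = v) E) + size (filter_mset (\<lambda>e. snd e = v) E)"

definition biregular34 :: "'v set \<Rightarrow> 'v set \<Rightarrow> ('v \<times> 'v) multiset \<Rightarrow> bool" where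
  "biregular34 X Y E \<longleftrightarrow> is_bigraph X Y E \<and>
     (\<forall>x\<in>X. deg E x = 3) \<and> (\<forall>y\<in>Y. deg E y = 4)"

definition adj_rel :: "('v \<times> 'v) multiset \<Rightarrow> ('v \<times> 'v) set" where
  "adj_rel E = set_mset E \<union> (set_mset E)\<inverse>"

definition reach :: "('v \<times> 'v) multiset \<Rightarrow> 'v \<Rightarrow> 'v \<Rightarrow> bool" where
  "reach E u v \<longleftrightarrow> (u, v) \<in> (adj_rel E)\<^sup>*"

definition connected_graph :: "'v set \<Rightarrow> ('v \<times> 'v) multiset \<Rightarrow> bool" where
  "connected_graph V E \<longleftrightarrow> V \<noteq> {} \<and> (\<forall>u\<in>V. \<forall>v\<in>V. reach E u v)"

definition two_edge_connected :: "'v set \<Rightarrow> ('v \<times> 'v) multiset \<Rightarrow> bool" where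
  "two_edge_connected V E \<longleftrightarrow> connected_graph V E \<and>
     (\<forall>e \<in># E. connected_graph V (E - {#e#}))"

definition component :: "'v set \<Rightarrow> ('v \<times> 'v) multiset \<Rightarrow> 'v \<Rightarrow> 'v set" where
  "component V F v = {u \<in> V. reach F v u}"

definition is_path_on :: "'v list \<Rightarrow> ('v \<times> 'v) multiset \<Rightarrow> bool" where
  "is_path_on p F \<longleftrightarrow> distinct p \<and>
     image_mset (\<lambda>(a, b). {a, b}) F =
       mset (map (\<lambda>i. {p ! i, p ! Suc i}) [0..<length p - 1])"

definition P7_factor :: "'v set \<Rightarrow> ('v \<times> 'v) multiset \<Rightarrow> ('v \<times> 'v) multiset \<Rightarrow> bool" where
  "P7_factor V E F \<longleftrightarrow> F \<subseteq># E \<and>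
     (\<forall>v\<in>V. \<exists>p. length p = 7 \<and> set p = component V F v \<and>
        is_path_on p (filter_mset (\<lambda>e. fst e \<in> component V F v) F))"

definition full_3reg_subgraph ::
  "'v set \<Rightarrow> 'v set \<Rightarrow> ('v \<times> 'v) multiset \<Rightarrow> 'v set \<Rightarrow> ('v \<times> 'v) multiset \<Rightarrow> bool" where
  "full_3reg_subgraph X Y E W H \<longleftrightarrow> W \<subseteq> X \<union> Y \<and> Y \<subseteq> W \<and> H \<subseteq># E \<and>
     (\<forall>e \<in># H. fst e \<in> W \<and> snd e \<in> W) \<and> (\<forall>w\<in>W. deg H w = 3)"

end

theory Submission
  imports Defs
begin

text \<open>The swap preserves every degree, and it keeps the two P7-factors because the
  swapped edges lie outside them. It keeps 2-edge-connectivity because each deleted edge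
  a_i b_i is replaced by a path a_i b_j ... a_j b_i through the other side.
  Finally, let H be a full 3-regular subgraph of G, let H_1 be its edges inside G_1 and
  s, t \<le> 1 the multiplicities of a_1 b_2 and a_2 b_1 in H. Counting the edges of H at the
  vertices of X_1 \<inter> V(H) and at those of Y_1 gives 3 |X_1 \<inter> V(H)| = |H_1| + s and
  3 |Y_1| = |H_1| + t, so s = t; then H_1 together with s copies of a_1 b_1 is a full
  3-regular subgraph of G_1.\<close>

definition edge_swap ::
  "('v \<times> 'v) multiset \<Rightarrow> 'v \<Rightarrow> 'v \<Rightarrow> ('v \<times> 'v) multiset \<Rightarrow> 'v \<Rightarrow> 'v \<Rightarrow> ('v \<times> 'v) multiset" where
  "edge_swap E1 a1 b1 E2 a2 b2 =
     (E1 - {#(a1, b1)#}) + (E2 - {#(a2, b2)#}) + {#(a1, b2), (a2, b1)#}"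

lemma edge_swap_commute: "edge_swap E1 a1 b1 E2 a2 b2 = edge_swap E2 a2 b2 E1 a1 b1"
  by (simp add: edge_swap_def add_mset_commute)

lemma deg_union: "deg (A + B) v = deg A v + deg B v"
  by (simp add: deg_def)

lemma deg_add_mset:
  "deg (add_mset e M) v = deg M v + (if fst e = v then 1 else 0) + (if snd e = v then 1 else 0)"
  by (simp add: deg_def)

lemma deg_replicate_mset:
  "deg (replicate_mset n (a, b)) v = n * ((if a = v then 1 else 0) + (if b = v then 1 else 0))"
  by (induction n) (auto simp: deg_add_mset deg_def)

lemma deg_eq_0_outside: "\<forall>e\<in>#M. fst e \<in> S \<and> snd e \<in> S \<Longrightarrow> v \<notin> S \<Longrightarrow> deg M v = 0"
  by (auto simp: deg_def filter_mset_eq_mempty_iff)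

lemma sum_deg_bipartite:
  assumes "finite S" "\<forall>e\<in>#M. (fst e \<in> S) \<noteq> (snd e \<in> S)"
  shows "(\<Sum>v\<in>S. deg M v) = size M"
  using assms(2)
proof (induction M)
  case empty
  then show ?case by (simp add: deg_def)
next
  case (add e M)
  have "(\<Sum>v\<in>S. deg (add_mset e M) v) =
      (\<Sum>v\<in>S. deg M v) + (\<Sum>v\<in>S. if fst e = v then 1 else 0) + (\<Sum>v\<in>S. if snd e = v then 1 else 0)"
    by (simp add: deg_add_mset sum.distrib)
  then show ?case using add assms(1) by auto
qed

lemma deg_edge_swap:
  assumes "(a1, b1) \<in># E1" "(a2, b2) \<in># E2"
  shows "deg (edge_swap E1 a1 b1 E2 a2 b2) v = deg E1 v + deg E2 v"
proof -
  have "deg E1 v = deg (E1 - {#(a1, b1)#}) v + (if a1 = v then 1 else 0) + (if b1 = v then 1 else 0)"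
    using deg_add_mset[of "(a1, b1)" "E1 - {#(a1, b1)#}"] assms(1) by simp
  moreover have "deg E2 v = deg (E2 - {#(a2, b2)#}) v + (if a2 = v then 1 else 0) + (if b2 = v then 1 else 0)"
    using deg_add_mset[of "(a2, b2)" "E2 - {#(a2, b2)#}"] assms(2) by simp
  ultimately show ?thesis
    by (simp add: edge_swap_def deg_union deg_add_mset)
qed

lemma reach_refl: "reach E u u"
  by (simp add: reach_def)

lemma reach_trans: "reach E u v \<Longrightarrow> reach E v w \<Longrightarrow> reach E u w"
  unfolding reach_def by (rule rtrancl_trans)

lemma reach_sym: "reach E u v \<Longrightarrow> reach E v u"
proof -
  have "(adj_rel E)\<inverse> = adj_rel E" by (auto simp: adj_rel_def)
  then show "reach E u v \<Longrightarrow> reach E v u" unfolding reach_def by (metis rtrancl_converseI)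
qed

lemma reach_if_adj: "(u, v) \<in> adj_rel E \<Longrightarrow> reach E u v"
  by (simp add: reach_def)

lemma reach_edge: "(u, v) \<in># E \<Longrightarrow> reach E u v" and reach_edge_rev: "(u, v) \<in># E \<Longrightarrow> reach E v u"
  by (simp_all add: reach_if_adj adj_rel_def)

lemma reach_mono: "A \<subseteq># B \<Longrightarrow> reach A u v \<Longrightarrow> reach B u v"
  unfolding reach_def adj_rel_def
  by (erule rtrancl_mono[THEN subsetD, rotated]) (auto dest: set_mset_mono)

lemma reach_closed:
  assumes "\<forall>e\<in>#A. fst e \<in> S \<and> snd e \<in> S" "v \<in> S" "reach A v u"
  shows "u \<in> S"
proof -
  from assms(3) have "(v, u) \<in> (adj_rel A)\<^sup>*" by (simp add: reach_def)
  then show ?thesis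
    by (induction rule: rtrancl_induct) (use assms(1,2) in \<open>auto simp: adj_rel_def\<close>)
qed

lemma reach_union_disjoint:
  assumes A: "\<forall>e\<in>#A. fst e \<in> V1 \<and> snd e \<in> V1" and B: "\<forall>e\<in>#B. fst e \<in> V2 \<and> snd e \<in> V2"
    and "V1 \<inter> V2 = {}" "v \<in> V1"
  shows "reach (A + B) v u \<longleftrightarrow> reach A v u"
proof
  assume "reach (A + B) v u"
  then have "(v, u) \<in> (adj_rel (A + B))\<^sup>*" by (simp add: reach_def)
  then have "reach A v u \<and> u \<in> V1"
  proof (induction rule: rtrancl_induct)
    case base
    then show ?case using assms(4) by (simp add: reach_refl)
  next
    case (step y z)
    then have "y \<in> V1" "reach A v y" by auto
    then have "y \<notin> V2" using assms(3) by blast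
    then have "(y, z) \<in> adj_rel A"
      using step.hyps(2) B unfolding adj_rel_def by fastforce
    then have "reach A v z" "z \<in> V1"
      using \<open>reach A v y\<close> A by (auto simp: adj_rel_def intro: reach_trans reach_edge reach_edge_rev)
    then show ?case ..
  qed
  then show "reach A v u" ..
qed (rule reach_mono[of A], simp)

lemma reach_replace_edge:
  assumes "reach (add_mset (a, b) D) u v" "D \<subseteq># M" "reach M a b"
  shows "reach M u v"
proof -
  from assms(1) have "(u, v) \<in> (adj_rel (add_mset (a, b) D))\<^sup>*" by (simp add: reach_def)
  then show ?thesis
  proof (induction rule: rtrancl_induct)
    case base
    then show ?case by (rule reach_refl)
  next
    case (step y z)
    then have "(y, z) \<in> adj_rel D \<or> (y, z) = (a, b) \<or> (y, z) = (b, a)"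
      by (auto simp: adj_rel_def)
    then have "reach M y z"
      using assms(2,3) by (auto intro: reach_mono reach_if_adj reach_sym)
    with step.IH show ?case by (rule reach_trans)
  qed
qed

lemma connected_graph_mono: "connected_graph V A \<Longrightarrow> A \<subseteq># M \<Longrightarrow> connected_graph V M"
  by (auto simp: connected_graph_def intro: reach_mono)

lemma connected_graph_replace_edge:
  "connected_graph V (add_mset (a, b) D) \<Longrightarrow> D \<subseteq># M \<Longrightarrow> reach M a b \<Longrightarrow> connected_graph V M"
  unfolding connected_graph_def by (metis reach_replace_edge)

lemma connected_graphI_center:
  "V \<noteq> {} \<Longrightarrow> (\<And>u. u \<in> V \<Longrightarrow> reach E u c) \<Longrightarrow> connected_graph V E"
  unfolding connected_graph_def by (meson reach_sym reach_trans)

lemma connected_graph_union: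
  assumes "connected_graph V1 M" "connected_graph V2 M" "x \<in> V1" "y \<in> V2" "reach M x y"
  shows "connected_graph (V1 \<union> V2) M"
proof (rule connected_graphI_center)
  fix u assume "u \<in> V1 \<union> V2"
  then show "reach M u y"
    using assms unfolding connected_graph_def by (meson Un_iff reach_trans)
qed (use assms(3) in blast)

lemma connected_edge_swap_delete_left:
  assumes "two_edge_connected V1 E1" "connected_graph V2 (E2 - {#(a2, b2)#})"
    and "a1 \<in> V1" "a2 \<in> V2" "b2 \<in> V2" "(a1, b1) \<in># E1"
    and e: "e \<in># E1 - {#(a1, b1)#}"
  shows "connected_graph (V1 \<union> V2) (edge_swap E1 a1 b1 E2 a2 b2 - {#e#})"
proof -
  define M where "M = edge_swap E1 a1 b1 E2 a2 b2 - {#e#}"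
  have M: "M = add_mset (a1, b2) (add_mset (a2, b1) ((E1 - {#(a1, b1)#} - {#e#}) + (E2 - {#(a2, b2)#})))"
    using e by (auto simp: M_def edge_swap_def multiset_eq_iff in_diff_count)
  have connected2: "connected_graph V2 M"
    using assms(2) by (rule connected_graph_mono) (simp add: M subset_mset.add_increasing)
  have "reach M a1 b1"
  proof -
    have "reach M a1 b2" "reach M a2 b1" by (simp_all add: M reach_edge)
    moreover have "reach M b2 a2" using connected2 assms(4,5) by (simp add: connected_graph_def)
    ultimately show ?thesis by (blast intro: reach_trans)
  qed
  have "e \<in># E1" using e by (rule in_diffD)
  then have "connected_graph V1 (E1 - {#e#})"
    using assms(1) by (simp add: two_edge_connected_def)
  moreover have "add_mset (a1, b1) (E1 - {#(a1, b1)#} - {#e#}) = E1 - {#e#}"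
    using e assms(6) by (auto simp: multiset_eq_iff in_diff_count)
  ultimately have "connected_graph V1 (add_mset (a1, b1) (E1 - {#(a1, b1)#} - {#e#}))"
    by (simp only:)
  then have connected1: "connected_graph V1 M"
    by (rule connected_graph_replace_edge) (simp add: M subseteq_mset_def, fact)
  show ?thesis unfolding M_def[symmetric]
    by (rule connected_graph_union[OF connected1 connected2 assms(3,5)]) (simp add: M reach_edge)
qed

lemma two_edge_connected_edge_swap:
  assumes G1: "two_edge_connected V1 E1" "a1 \<in> V1" "b1 \<in> V1" "(a1, b1) \<in># E1"
    and G2: "two_edge_connected V2 E2" "a2 \<in> V2" "b2 \<in> V2" "(a2, b2) \<in># E2"
  shows "two_edge_connected (V1 \<union> V2) (edge_swap E1 a1 b1 E2 a2 b2)"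
  unfolding two_edge_connected_def
proof (intro conjI ballI)
  let ?E1 = "E1 - {#(a1, b1)#}" and ?E2 = "E2 - {#(a2, b2)#}"
  have c1: "connected_graph V1 ?E1" and c2: "connected_graph V2 ?E2"
    using G1 G2 by (simp_all add: two_edge_connected_def)
  have joined: "connected_graph (V1 \<union> V2) M"
    if "?E1 + ?E2 \<subseteq># M" "(a1, b2) \<in># M \<or> (a2, b1) \<in># M" for M
  proof -
    have "connected_graph V1 M" "connected_graph V2 M"
      using c1 c2 that(1)
      by (meson connected_graph_mono mset_subset_eq_add_left mset_subset_eq_add_right subset_mset.order_trans)+
    with that(2) show ?thesis
      using connected_graph_union[of V1 M V2, OF _ _ G1(2) G2(3)]
        connected_graph_union[of V1 M V2, OF _ _ G1(3) G2(2)]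
      by (blast intro: reach_edge reach_edge_rev)
  qed
  show "connected_graph (V1 \<union> V2) (edge_swap E1 a1 b1 E2 a2 b2)"
    by (rule joined) (simp_all add: edge_swap_def)
  fix e assume "e \<in># edge_swap E1 a1 b1 E2 a2 b2"
  then consider "e \<in># ?E1" | "e \<in># ?E2" | "e = (a1, b2)" | "e = (a2, b1)"
    by (auto simp: edge_swap_def)
  then show "connected_graph (V1 \<union> V2) (edge_swap E1 a1 b1 E2 a2 b2 - {#e#})"
  proof cases
    case 1
    then show ?thesis by (rule connected_edge_swap_delete_left[OF G1(1) c2 G1(2) G2(2,3) G1(4)])
  next
    case 2
    then have "connected_graph (V2 \<union> V1) (edge_swap E2 a2 b2 E1 a1 b1 - {#e#})"
      by (rule connected_edge_swap_delete_left[OF G2(1) c1 G2(2) G1(2,3) G2(4)])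
    then show ?thesis by (simp only: edge_swap_commute[of E2] Un_commute[of V2])
  next
    case 3
    then show ?thesis by (intro joined) (auto simp: edge_swap_def)
  next
    case 4
    then show ?thesis by (intro joined) (auto simp: edge_swap_def)
  qed
qed

lemma component_union_disjoint:
  assumes "\<forall>e\<in>#A. fst e \<in> V1 \<and> snd e \<in> V1" "\<forall>e\<in>#B. fst e \<in> V2 \<and> snd e \<in> V2"
    and "V1 \<inter> V2 = {}" "v \<in> V1"
  shows "component (V1 \<union> V2) (A + B) v = component V1 A v"
  using reach_union_disjoint[OF assms] reach_closed[OF assms(1,4)]
  by (auto simp: component_def)

lemma P7_factor_union:
  assumes P1: "P7_factor V1 E1 F1" and P2: "P7_factor V2 E2 F2"
    and F1: "\<forall>e\<in>#F1. fst e \<in> V1 \<and> snd e \<in> V1" and F2: "\<forall>e\<in>#F2. fst e \<in> V2 \<and> snd e \<in> V2"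
    and disjoint: "V1 \<inter> V2 = {}" and "F1 + F2 \<subseteq># E"
  shows "P7_factor (V1 \<union> V2) E (F1 + F2)"
proof -
  have left: "\<exists>p. length p = 7 \<and> set p = component (V1 \<union> V2) (F1 + F2) v \<and>
      is_path_on p (filter_mset (\<lambda>e. fst e \<in> component (V1 \<union> V2) (F1 + F2) v) (F1 + F2))"
    if "P7_factor V1 E1 F1" "\<forall>e\<in>#F1. fst e \<in> V1 \<and> snd e \<in> V1"
      "\<forall>e\<in>#F2. fst e \<in> V2 \<and> snd e \<in> V2" "V1 \<inter> V2 = {}" "v \<in> V1"
    for V1 V2 E1 F1 F2 v
  proof -
    have comp: "component (V1 \<union> V2) (F1 + F2) v = component V1 F1 v"
      using that(2-5) by (rule component_union_disjoint)
    have "component V1 F1 v \<subseteq> V1" by (auto simp: component_def)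
    then have F2_outside: "filter_mset (\<lambda>e. fst e \<in> component V1 F1 v) F2 = {#}"
      using that(3,4) by (fastforce simp: filter_mset_eq_mempty_iff)
    show ?thesis using that(1,5) unfolding comp P7_factor_def filter_union_mset F2_outside by simp
  qed
  show ?thesis unfolding P7_factor_def
  proof (intro conjI ballI)
    fix v assume "v \<in> V1 \<union> V2"
    then show "\<exists>p. length p = 7 \<and> set p = component (V1 \<union> V2) (F1 + F2) v \<and>
        is_path_on p (filter_mset (\<lambda>e. fst e \<in> component (V1 \<union> V2) (F1 + F2) v) (F1 + F2))"
      using left[OF P1 F1 F2 disjoint] left[OF P2 F2 F1] disjoint
      by (auto simp: Un_commute add.commute Int_commute)
  qed fact
qed

locale edge_swap_bigraphs =
  fixes X1 Y1 :: "'v set" and E1 :: "('v \<times> 'v) multiset" and a1 b1 :: 'v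
    and X2 Y2 :: "'v set" and E2 :: "('v \<times> 'v) multiset" and a2 b2 :: 'v
  assumes bigraph1: "is_bigraph X1 Y1 E1" and bigraph2: "is_bigraph X2 Y2 E2"
    and disjoint: "(X1 \<union> Y1) \<inter> (X2 \<union> Y2) = {}"
    and a1: "a1 \<in> X1" and b1: "b1 \<in> Y1" and edge1: "(a1, b1) \<in># E1"
    and a2: "a2 \<in> X2" and b2: "b2 \<in> Y2" and edge2: "(a2, b2) \<in># E2"
begin

abbreviation E :: "('v \<times> 'v) multiset" where
  "E \<equiv> edge_swap E1 a1 b1 E2 a2 b2"

abbreviation part1 :: "('v \<times> 'v) multiset \<Rightarrow> ('v \<times> 'v) multiset" where
  "part1 H \<equiv> filter_mset (\<lambda>e. fst e \<in> X1 \<and> snd e \<in> Y1) H"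

abbreviation part2 :: "('v \<times> 'v) multiset \<Rightarrow> ('v \<times> 'v) multiset" where
  "part2 H \<equiv> filter_mset (\<lambda>e. fst e \<in> X2 \<and> snd e \<in> Y2) H"

lemma edges1: "e \<in># E1 \<Longrightarrow> fst e \<in> X1 \<and> snd e \<in> Y1"
  using bigraph1 by (simp add: is_bigraph_def)

lemma edges2: "e \<in># E2 \<Longrightarrow> fst e \<in> X2 \<and> snd e \<in> Y2"
  using bigraph2 by (simp add: is_bigraph_def)

lemma vertex_sets_eq: "(X1 \<union> Y1) \<union> (X2 \<union> Y2) = (X1 \<union> X2) \<union> (Y1 \<union> Y2)"
  by blast

lemma is_bigraph_edge_swap: "is_bigraph (X1 \<union> X2) (Y1 \<union> Y2) E"
  using bigraph1 bigraph2 disjoint a1 b1 a2 b2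
  by (auto simp: is_bigraph_def edge_swap_def dest: in_diffD)

lemma biregular34_edge_swap:
  assumes "biregular34 X1 Y1 E1" "biregular34 X2 Y2 E2"
  shows "biregular34 (X1 \<union> X2) (Y1 \<union> Y2) E"
proof -
  have "deg E2 v = 0" if "v \<in> X1 \<union> Y1" for v
    using edges2 disjoint that by (intro deg_eq_0_outside[where S = "X2 \<union> Y2"]) auto
  moreover have "deg E1 v = 0" if "v \<in> X2 \<union> Y2" for v
    using edges1 disjoint that by (intro deg_eq_0_outside[where S = "X1 \<union> Y1"]) auto
  ultimately show ?thesis
    using assms is_bigraph_edge_swap deg_edge_swap[OF edge1 edge2]
    by (auto simp: biregular34_def)
qed

lemma two_edge_connected_edge_swap_bigraphs:
  assumes "two_edge_connected (X1 \<union> Y1) E1" "two_edge_connected (X2 \<union> Y2) E2"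
  shows "two_edge_connected ((X1 \<union> X2) \<union> (Y1 \<union> Y2)) E"
  using two_edge_connected_edge_swap[OF assms(1) _ _ edge1 assms(2) _ _ edge2] a1 b1 a2 b2
  by (simp add: vertex_sets_eq)

lemma P7_factor_edge_swap:
  assumes F1: "P7_factor (X1 \<union> Y1) E1 F1" "(a1, b1) \<in># E1 - F1"
    and F2: "P7_factor (X2 \<union> Y2) E2 F2" "(a2, b2) \<in># E2 - F2"
  shows "P7_factor ((X1 \<union> X2) \<union> (Y1 \<union> Y2)) E (F1 + F2)"
proof -
  have sub1: "F1 \<subseteq># E1 - {#(a1, b1)#}" and sub2: "F2 \<subseteq># E2 - {#(a2, b2)#}"
    using F1 F2 by (auto simp: P7_factor_def subseteq_mset_def in_diff_count)
  then have "F1 + F2 \<subseteq># E1 - {#(a1, b1)#} + (E2 - {#(a2, b2)#})"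
    by (rule subset_mset.add_mono)
  then have "F1 + F2 \<subseteq># E"
    unfolding edge_swap_def by (rule subset_mset.order_trans) simp
  moreover have "\<forall>e\<in>#F1. fst e \<in> X1 \<union> Y1 \<and> snd e \<in> X1 \<union> Y1"
    using sub1 edges1 by (auto dest!: mset_subset_eqD in_diffD)
  moreover have "\<forall>e\<in>#F2. fst e \<in> X2 \<union> Y2 \<and> snd e \<in> X2 \<union> Y2"
    using sub2 edges2 by (auto dest!: mset_subset_eqD in_diffD)
  ultimately show ?thesis
    using P7_factor_union[OF F1(1) F2(1) _ _ disjoint] by (simp add: vertex_sets_eq)
qed

lemma count_cross_edges: "count E (a1, b2) = 1" "count E (a2, b1) = 1"
proof -
  have "(a1, b2) \<notin># E1 - {#(a1, b1)#}" "(a2, b1) \<notin># E1 - {#(a1, b1)#}"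
    using edges1 disjoint a2 b2 by (fastforce dest: in_diffD)+
  moreover have "(a1, b2) \<notin># E2 - {#(a2, b2)#}" "(a2, b1) \<notin># E2 - {#(a2, b2)#}"
    using edges2 disjoint a1 b1 by (fastforce dest: in_diffD)+
  moreover have "a1 \<noteq> a2" using a1 a2 disjoint by blast
  ultimately show "count E (a1, b2) = 1" "count E (a2, b1) = 1"
    by (auto simp: edge_swap_def not_in_iff)
qed

lemma part1_edge_swap: "part1 E = E1 - {#(a1, b1)#}"
proof -
  have "part1 (E1 - {#(a1, b1)#}) = E1 - {#(a1, b1)#}"
    by (subst filter_mset_eq_conv) (auto dest!: in_diffD edges1)
  moreover have "part1 (E2 - {#(a2, b2)#}) = {#}"
    using disjoint a2 b2 by (auto simp: filter_mset_eq_mempty_iff dest!: in_diffD edges2)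
  moreover have "b2 \<notin> Y1" "a2 \<notin> X1" using a2 b2 disjoint by blast+
  ultimately show ?thesis by (simp add: edge_swap_def)
qed

lemma subgraph_edge_swap_decompose:
  assumes "H \<subseteq># E"
  shows "H = part1 H + part2 H + replicate_mset (count H (a1, b2)) (a1, b2)
    + replicate_mset (count H (a2, b1)) (a2, b1)"
proof (rule multiset_eqI)
  have classes: "(fst e \<in> X1 \<and> snd e \<in> Y1) \<or> (fst e \<in> X2 \<and> snd e \<in> Y2) \<or> e = (a1, b2) \<or> e = (a2, b1)"
    if "e \<in># H" for e
    using mset_subset_eqD[OF assms that] by (auto simp: edge_swap_def dest!: in_diffD edges1 edges2)
  have "a1 \<notin> X2" "b2 \<notin> Y1" "a2 \<notin> X1" "b1 \<notin> Y2" "X1 \<inter> X2 = {}" "a1 \<noteq> a2"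
    using a1 b1 a2 b2 disjoint by blast+
  fix e
  show "count H e = count (part1 H + part2 H + replicate_mset (count H (a1, b2)) (a1, b2)
      + replicate_mset (count H (a2, b1)) (a2, b1)) e"
    using classes[of e] \<open>a1 \<notin> X2\<close> \<open>b2 \<notin> Y1\<close> \<open>a2 \<notin> X1\<close> \<open>b1 \<notin> Y2\<close> \<open>X1 \<inter> X2 = {}\<close> \<open>a1 \<noteq> a2\<close>
    by (cases "e \<in># H") (auto simp: not_in_iff)
qed

lemma deg_subgraph_edge_swap_left:
  assumes "H \<subseteq># E" "v \<in> X1 \<union> Y1"
  shows "deg H v = deg (part1 H) v + (if a1 = v then count H (a1, b2) else 0)
    + (if b1 = v then count H (a2, b1) else 0)"
proof -
  have "deg H v = deg (part1 H + part2 H + replicate_mset (count H (a1, b2)) (a1, b2)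
      + replicate_mset (count H (a2, b1)) (a2, b1)) v"
    by (simp only: subgraph_edge_swap_decompose[OF assms(1), symmetric])
  moreover have "deg (part2 H) v = 0"
    using assms(2) disjoint by (intro deg_eq_0_outside[where S = "X2 \<union> Y2"]) auto
  moreover have "b2 \<noteq> v" "a2 \<noteq> v" using assms(2) a2 b2 disjoint by auto
  ultimately show ?thesis by (simp add: deg_union deg_replicate_mset)
qed

lemma full_3reg_subgraph_edge_swap_cross_counts:
  assumes "full_3reg_subgraph (X1 \<union> X2) (Y1 \<union> Y2) E W H"
  shows "count H (a1, b2) = count H (a2, b1)"
proof -
  let ?s = "count H (a1, b2)" and ?t = "count H (a2, b1)"
  have sub: "H \<subseteq># E" and in_W: "\<forall>e\<in>#H. fst e \<in> W \<and> snd e \<in> W"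
    and Y1_W: "Y1 \<subseteq> W" and deg3: "\<forall>w\<in>W. deg H w = 3"
    using assms by (auto simp: full_3reg_subgraph_def)
  have "?s \<le> 1" "?t \<le> 1"
    using mset_subset_eq_count[OF sub] count_cross_edges by metis+
  have fin: "finite (W \<inter> X1)" "finite Y1" using bigraph1 by (auto simp: is_bigraph_def)
  have X1_Y1: "X1 \<inter> Y1 = {}" using bigraph1 by (simp add: is_bigraph_def)
  have part1_in_W: "fst e \<in> W \<inter> X1 \<and> snd e \<in> W \<inter> Y1" if "e \<in># part1 H" for e
    using that in_W by auto
  have sum_part1: "(\<Sum>x\<in>W \<inter> X1. deg (part1 H) x) = size (part1 H)"
    "(\<Sum>y\<in>Y1. deg (part1 H) y) = size (part1 H)"
    using part1_in_W X1_Y1 by (intro sum_deg_bipartite fin; blast)+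
  have "3 * card (W \<inter> X1) = (\<Sum>x\<in>W \<inter> X1. deg H x)"
    using deg3 by simp
  also have "\<dots> = (\<Sum>x\<in>W \<inter> X1. deg (part1 H) x + (if a1 = x then ?s else 0))"
    using deg_subgraph_edge_swap_left[OF sub] b1 X1_Y1 by (intro sum.cong) auto
  also have "\<dots> = size (part1 H) + (if a1 \<in> W then ?s else 0)"
    using sum_part1 fin(1) a1 by (simp add: sum.distrib)
  also have "\<dots> = size (part1 H) + ?s"
    using in_W by (auto simp: not_in_iff[symmetric])
  finally have X_side: "3 * card (W \<inter> X1) = size (part1 H) + ?s" .
  have "3 * card Y1 = (\<Sum>y\<in>Y1. deg H y)"
    using deg3 Y1_W by (simp add: subset_iff)
  also have "\<dots> = (\<Sum>y\<in>Y1. deg (part1 H) y + (if b1 = y then ?t else 0))"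
    using deg_subgraph_edge_swap_left[OF sub] a1 X1_Y1 by (intro sum.cong) auto
  also have "\<dots> = size (part1 H) + ?t"
    using sum_part1 fin(2) b1 by (simp add: sum.distrib)
  finally have Y_side: "3 * card Y1 = size (part1 H) + ?t" .
  from X_side Y_side \<open>?s \<le> 1\<close> \<open>?t \<le> 1\<close> show ?thesis by presburger
qed

lemma full_3reg_subgraph_edge_swap_restrict:
  assumes full: "full_3reg_subgraph (X1 \<union> X2) (Y1 \<union> Y2) E W H"
  shows "full_3reg_subgraph X1 Y1 E1 (W \<inter> (X1 \<union> Y1))
    (part1 H + replicate_mset (count H (a1, b2)) (a1, b1))"
proof -
  let ?s = "count H (a1, b2)" and ?H' = "part1 H + replicate_mset (count H (a1, b2)) (a1, b1)"
  have sub: "H \<subseteq># E" and in_W: "\<forall>e\<in>#H. fst e \<in> W \<and> snd e \<in> W"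
    and Y_W: "Y1 \<union> Y2 \<subseteq> W" and deg3: "\<forall>w\<in>W. deg H w = 3"
    using full by (auto simp: full_3reg_subgraph_def)
  have "?s \<le> 1" using mset_subset_eq_count[OF sub] count_cross_edges by metis
  have "part1 H \<subseteq># part1 E" by (rule multiset_filter_mono[OF sub])
  then have "part1 H \<subseteq># E1 - {#(a1, b1)#}" by (simp only: part1_edge_swap)
  moreover have "replicate_mset ?s (a1, b1) \<subseteq># {#(a1, b1)#}"
    using \<open>?s \<le> 1\<close> by (cases ?s) auto
  ultimately have "?H' \<subseteq># E1 - {#(a1, b1)#} + {#(a1, b1)#}"
    by (rule subset_mset.add_mono)
  then have subgraph: "?H' \<subseteq># E1" using edge1 by simp
  have "a1 \<in> W" if "?s > 0"
    using that in_W by (auto simp: not_in_iff[symmetric])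
  then have inside: "\<forall>e\<in>#?H'. fst e \<in> W \<inter> (X1 \<union> Y1) \<and> snd e \<in> W \<inter> (X1 \<union> Y1)"
    using in_W Y_W a1 b1 by (auto split: if_splits)
  have "a1 \<noteq> b1" using a1 b1 bigraph1 by (auto simp: is_bigraph_def)
  then have degree: "\<forall>w\<in>W \<inter> (X1 \<union> Y1). deg ?H' w = 3"
    using deg3 deg_subgraph_edge_swap_left[OF sub] full_3reg_subgraph_edge_swap_cross_counts[OF full]
    by (auto simp: deg_union deg_replicate_mset)
  show ?thesis
    unfolding full_3reg_subgraph_def using subgraph inside degree Y_W by blast
qed

end

theorem mainTheorem3:
  fixes X1 Y1 X2 Y2 :: "'v set" and E1 E2 F1 F2 :: "('v \<times> 'v) multiset"
    and a1 b1 a2 b2 :: 'v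
  assumes G1: "biregular34 X1 Y1 E1" "two_edge_connected (X1 \<union> Y1) E1"
    and G2: "biregular34 X2 Y2 E2" "two_edge_connected (X2 \<union> Y2) E2"
    and disj: "(X1 \<union> Y1) \<inter> (X2 \<union> Y2) = {}"
    and F1: "P7_factor (X1 \<union> Y1) E1 F1"
    and F2: "P7_factor (X2 \<union> Y2) E2 F2"
    and e1: "a1 \<in> X1" "b1 \<in> Y1" "(a1, b1) \<in># E1 - F1"
    and e2: "a2 \<in> X2" "b2 \<in> Y2" "(a2, b2) \<in># E2 - F2"
    and no_full: "\<not> (\<exists>W H. full_3reg_subgraph X1 Y1 E1 W H)"
  shows "let X = X1 \<union> X2; Y = Y1 \<union> Y2;
             E = (E1 - {#(a1, b1)#}) + (E2 - {#(a2, b2)#}) + {#(a1, b2), (a2, b1)#}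
         in biregular34 X Y E \<and> two_edge_connected (X \<union> Y) E \<and>
            (\<exists>F. P7_factor (X \<union> Y) E F) \<and>
            \<not> (\<exists>W H. full_3reg_subgraph X Y E W H)"
proof -
  interpret edge_swap_bigraphs X1 Y1 E1 a1 b1 X2 Y2 E2 a2 b2
    using G1(1) G2(1) disj e1 e2 by unfold_locales (auto simp: biregular34_def dest: in_diffD)
  show ?thesis
    unfolding Let_def edge_swap_def[symmetric]
    using biregular34_edge_swap[OF G1(1) G2(1)] two_edge_connected_edge_swap_bigraphs[OF G1(2) G2(2)]
      P7_factor_edge_swap[OF F1 e1(3) F2 e2(3)] full_3reg_subgraph_edge_swap_restrict no_full
    by blast
qed

end
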